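(* Let $A$ be an $n\times n$ matrix with a designated set of large positions, and let $(X,Y)$ be a restriction with $m=|X|\ge1$ that is $q$-good for some $q<\frac{1}{4m}$. Then $(X,Y)$ has a $0$-strong line, i.e. a row $i\in X$ with $(i,j)$ large for all $j\in Y$, or a column $j\in Y$ with $(i,j)$ large for all $i\in X$.
   Context: Let $A=(a_{ij})_{i,j\in[n]}$ with a designated set $L\subseteq[n]\times[n]$ of large positions. A restriction is $(X,Y)$ with $X,Y\subseteq[n]$, $|X|=|Y|$; a generalized diagonal of $A[X,Y]$ is $\{(i,\sigma(i)):i\in X\}$ for a bijection $\sigma:X\to Y$, random meaning uniform $\sigma$; it is good if it contains exactly one large position; $(X,Y)$ is $q$-good if a random generalized diagonal is good with probability $\ge1-q$. *)

theory Defs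
  imports Complex_Main "HOL-Library.FuncSet"
begin

text \<open>Positions are pairs (i,j) of indices in [n] = {1..n}; the set L of large
positions is all that matters for the notions below.  A restriction is (X,Y)
with X,Y subsets of [n] and card X = card Y.\<close>

definition restriction :: "nat \<Rightarrow> nat set \<Rightarrow> nat set \<Rightarrow> bool" where
  "restriction n X Y \<longleftrightarrow> X \<subseteq> {1..n} \<and> Y \<subseteq> {1..n} \<and> card X = card Y"

text \<open>Bijections X \<rightarrow> Y (as extensional functions, so that there are finitely many);
each such sigma determines the generalized diagonal {(i, sigma i) | i in X}.\<close>
definition bijections :: "nat set \<Rightarrow> nat set \<Rightarrow> (nat \<Rightarrow> nat) set" where
  "bijections X Y = {\<sigma> \<in> X \<rightarrow>\<^sub>E Y. bij_betw \<sigma> X Y}"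

definition gen_diagonal :: "nat set \<Rightarrow> (nat \<Rightarrow> nat) \<Rightarrow> (nat \<times> nat) set" where
  "gen_diagonal X \<sigma> = (\<lambda>i. (i, \<sigma> i)) ` X"

definition good_diagonal :: "(nat \<times> nat) set \<Rightarrow> (nat \<times> nat) set \<Rightarrow> bool" where
  "good_diagonal L D \<longleftrightarrow> card (D \<inter> L) = 1"

definition q_good :: "(nat \<times> nat) set \<Rightarrow> real \<Rightarrow> nat set \<Rightarrow> nat set \<Rightarrow> bool" where
  "q_good L q X Y \<longleftrightarrow>
     real (card {\<sigma> \<in> bijections X Y. good_diagonal L (gen_diagonal X \<sigma>)})
       / real (card (bijections X Y)) \<ge> 1 - q"

definition has_0_strong_line :: "(nat \<times> nat) set \<Rightarrow> nat set \<Rightarrow> nat set \<Rightarrow> bool" where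
  "has_0_strong_line L X Y \<longleftrightarrow>
     (\<exists>i\<in>X. \<forall>j\<in>Y. (i, j) \<in> L) \<or> (\<exists>j\<in>Y. \<forall>i\<in>X. (i, j) \<in> L)"

end

theory Submission
  imports Defs "HOL-Combinatorics.Transposition"
begin

(*
  Suppose there is no 0-strong line.  Since q < 1, some diagonal is good,
  so there is a large position (a,e) with a in X, e in Y.  Row a is not entirely large
  (some (a,d) is small) and column e is not entirely large (some (c,e) is small).
  Group the bijections into "swap classes": those mapping the rows {a,k} onto the
  columns {u,v}, i.e. sigma a = u, sigma k = v or the transposed assignment.  Each
  half of a swap class has exactly (m-2)! elements, and under suitable smallness
  conditions at least (m-2)! members of a class are bad: swapping the values at a and k
  turns a good diagonal whose only large position is (a,u) into one with none.
  Choosing m-1 pairwise disjoint classes (twice, if row a contains a second large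
  position) gives (m-1)! <= 2 |bad|, whereas q-goodness gives |bad| <= q m! < (m-1)!/4.
*)

lemma finite_bijections:
  assumes "finite X" "finite Y"
  shows "finite (bijections X Y)"
proof (rule finite_subset)
  show "bijections X Y \<subseteq> X \<rightarrow>\<^sub>E Y" unfolding bijections_def by blast
  show "finite (X \<rightarrow>\<^sub>E Y)" using assms by (simp add: finite_PiE)
qed

lemma bijections_fix_point:
  assumes a: "a \<in> X" and u: "u \<in> Y"
  shows "bij_betw (\<lambda>\<sigma>. restrict \<sigma> (X - {a})) {\<sigma> \<in> bijections X Y. \<sigma> a = u}
           (bijections (X - {a}) (Y - {u}))"
proof (rule bij_betw_byWitness[where f' = "\<lambda>\<tau>. \<tau>(a := u)"])
  show "\<forall>\<sigma>\<in>{\<sigma> \<in> bijections X Y. \<sigma> a = u}. (restrict \<sigma> (X - {a}))(a := u) = \<sigma>"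
    using a by (force simp: bijections_def PiE_iff extensional_def fun_eq_iff)
  show "\<forall>\<tau>\<in>bijections (X - {a}) (Y - {u}). restrict (\<tau>(a := u)) (X - {a}) = \<tau>"
    by (force simp: bijections_def PiE_iff extensional_def fun_eq_iff)
  show "(\<lambda>\<sigma>. restrict \<sigma> (X - {a})) ` {\<sigma> \<in> bijections X Y. \<sigma> a = u}
          \<subseteq> bijections (X - {a}) (Y - {u})"
  proof (rule image_subsetI)
    fix \<sigma> assume "\<sigma> \<in> {\<sigma> \<in> bijections X Y. \<sigma> a = u}"
    then have "bij_betw \<sigma> (X - {a}) (Y - {u})"
      using a by (intro bij_betw_DiffI) (auto simp: bijections_def bij_betw_def)
    then show "restrict \<sigma> (X - {a}) \<in> bijections (X - {a}) (Y - {u})"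
      by (auto simp: bijections_def bij_betw_def)
  qed
  show "(\<lambda>\<tau>. \<tau>(a := u)) ` bijections (X - {a}) (Y - {u}) \<subseteq> {\<sigma> \<in> bijections X Y. \<sigma> a = u}"
  proof (rule image_subsetI)
    fix \<tau> assume \<tau>: "\<tau> \<in> bijections (X - {a}) (Y - {u})"
    then have "bij_betw (\<tau>(a := u)) (insert a (X - {a})) (insert u (Y - {u}))"
      by (auto simp: bijections_def bij_betw_def inj_on_def)
    then show "\<tau>(a := u) \<in> {\<sigma> \<in> bijections X Y. \<sigma> a = u}"
      using \<tau> a u by (auto simp: bijections_def insert_absorb PiE_iff extensional_def)
  qed
qed

lemma card_bijections_fix_point:
  assumes "a \<in> X" "u \<in> Y"
  shows "card {\<sigma> \<in> bijections X Y. \<sigma> a = u} = card (bijections (X - {a}) (Y - {u}))"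
  using bij_betw_same_card[OF bijections_fix_point[OF assms]] .

lemma card_bijections:
  assumes "finite X" "finite Y" "card X = card Y"
  shows "card (bijections X Y) = fact (card X)"
  using assms
proof (induction "card X" arbitrary: X Y)
  case 0
  then show ?case by (simp add: bijections_def bij_betw_def)
next
  case (Suc m)
  then obtain a where a: "a \<in> X" by fastforce
  have fibres: "bijections X Y = (\<Union>u\<in>Y. {\<sigma> \<in> bijections X Y. \<sigma> a = u})"
    using a by (auto simp: bijections_def)
  have fibre_card: "card {\<sigma> \<in> bijections X Y. \<sigma> a = u} = fact m" if u: "u \<in> Y" for u
  proof -
    have "card (X - {a}) = m" using Suc.hyps(2) Suc.prems(1) a by simp
    moreover have "card (bijections (X - {a}) (Y - {u})) = fact (card (X - {a}))"
      using Suc a u by (intro Suc.hyps(1)) auto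
    ultimately show ?thesis using card_bijections_fix_point[OF a u] by simp
  qed
  have "card (bijections X Y) = (\<Sum>u\<in>Y. card {\<sigma> \<in> bijections X Y. \<sigma> a = u})"
    by (subst fibres, rule card_UN_disjoint)
       (use Suc.prems finite_bijections in auto)
  also have "\<dots> = card Y * fact m" using fibre_card by simp
  also have "\<dots> = fact (Suc m)" using Suc.hyps(2) Suc.prems(3) by (metis fact_Suc of_nat_id)
  finally show ?case using Suc.hyps(2) by simp
qed

definition pinned :: "nat set \<Rightarrow> nat set \<Rightarrow> nat \<Rightarrow> nat \<Rightarrow> nat \<Rightarrow> nat \<Rightarrow> (nat \<Rightarrow> nat) set" where
  "pinned X Y a u k v = {\<sigma> \<in> bijections X Y. \<sigma> a = u \<and> \<sigma> k = v}"

lemma card_pinned: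
  assumes "finite X" "finite Y" "card X = card Y"
    and "a \<in> X" "k \<in> X" "a \<noteq> k" "u \<in> Y" "v \<in> Y" "u \<noteq> v"
  shows "card (pinned X Y a u k v) = fact (card X - 2)"
proof -
  have "pinned X Y a u k v = {\<sigma> \<in> {\<sigma> \<in> bijections X Y. \<sigma> a = u}. \<sigma> k = v}"
    unfolding pinned_def by auto
  moreover have "bij_betw (\<lambda>\<sigma>. restrict \<sigma> (X - {a})) {\<sigma> \<in> {\<sigma> \<in> bijections X Y. \<sigma> a = u}. \<sigma> k = v}
          {\<tau> \<in> bijections (X - {a}) (Y - {u}). \<tau> k = v}"
    using assms by (intro bij_betw_Collect[OF bijections_fix_point]) auto
  ultimately have "bij_betw (\<lambda>\<sigma>. restrict \<sigma> (X - {a})) (pinned X Y a u k v)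
          {\<tau> \<in> bijections (X - {a}) (Y - {u}). \<tau> k = v}"
    by simp
  then have "card (pinned X Y a u k v) = card (bijections (X - {a} - {k}) (Y - {u} - {v}))"
    using assms by (simp add: bij_betw_same_card card_bijections_fix_point)
  also have "\<dots> = fact (card X - 2)"
    using assms by (subst card_bijections) (auto simp: numeral_2_eq_2)
  finally show ?thesis .
qed

definition large_rows :: "(nat \<times> nat) set \<Rightarrow> nat set \<Rightarrow> (nat \<Rightarrow> nat) \<Rightarrow> nat set" where
  "large_rows L X \<sigma> = {i \<in> X. (i, \<sigma> i) \<in> L}"

lemma good_diagonal_iff:
  "good_diagonal L (gen_diagonal X \<sigma>) \<longleftrightarrow> card (large_rows L X \<sigma>) = 1"
proof -
  have "gen_diagonal X \<sigma> \<inter> L = (\<lambda>i. (i, \<sigma> i)) ` large_rows L X \<sigma>"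
    unfolding gen_diagonal_def large_rows_def by blast
  then have "card (gen_diagonal X \<sigma> \<inter> L) = card (large_rows L X \<sigma>)"
    by (simp add: card_image inj_on_def)
  then show ?thesis by (simp add: good_diagonal_def)
qed

lemma two_large_not_good:
  assumes "finite X" "a \<in> large_rows L X \<sigma>" "k \<in> large_rows L X \<sigma>" "a \<noteq> k"
  shows "\<not> good_diagonal L (gen_diagonal X \<sigma>)"
proof -
  have "finite (large_rows L X \<sigma>)" using assms(1) by (simp add: large_rows_def)
  then have "card {a, k} \<le> card (large_rows L X \<sigma>)"
    using assms(2,3) by (intro card_mono) auto
  then show ?thesis using assms(4) by (simp add: good_diagonal_iff)
qed

lemma transpose_bijections:
  assumes "\<sigma> \<in> bijections X Y" "a \<in> X" "k \<in> X"
  shows "\<sigma> \<circ> transpose a k \<in> bijections X Y"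
  using assms by (auto simp: bijections_def bij_betw_swap_iff PiE_iff extensional_def transpose_def)

definition bad_bijections :: "(nat \<times> nat) set \<Rightarrow> nat set \<Rightarrow> nat set \<Rightarrow> (nat \<Rightarrow> nat) set" where
  "bad_bijections L X Y = {\<sigma> \<in> bijections X Y. \<not> good_diagonal L (gen_diagonal X \<sigma>)}"

definition swap_class :: "nat set \<Rightarrow> nat set \<Rightarrow> nat \<Rightarrow> nat \<Rightarrow> nat \<Rightarrow> nat \<Rightarrow> (nat \<Rightarrow> nat) set" where
  "swap_class X Y a k u v = pinned X Y a u k v \<union> pinned X Y a v k u"

(* If (a,u) is large but (a,v) and (k,u) are small, then exchanging the values at a and k
   destroys a good diagonal through (a,u): its only large position disappears and no
   new one appears. *)
lemma swap_good_to_bad: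
  assumes "\<sigma> \<in> pinned X Y a u k v" "a \<in> X"
    and "(a, u) \<in> L" "(a, v) \<notin> L" "(k, u) \<notin> L"
    and "good_diagonal L (gen_diagonal X \<sigma>)"
  shows "\<not> good_diagonal L (gen_diagonal X (\<sigma> \<circ> transpose a k))"
proof -
  have "a \<in> large_rows L X \<sigma>" using assms(1-3) by (simp add: pinned_def large_rows_def)
  then have only_a: "large_rows L X \<sigma> = {a}"
    using assms(6) by (metis card_1_singletonE good_diagonal_iff singletonD)
  have "large_rows L X (\<sigma> \<circ> transpose a k) = {}"
  proof -
    have "(i, \<sigma> (transpose a k i)) \<notin> L" if "i \<in> X" for i
    proof (cases "i = a \<or> i = k")
      case True then show ?thesis using assms(1,4,5) by (auto simp: pinned_def)
    next
      case False then show ?thesis using only_a that by (auto simp: large_rows_def)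
    qed
    then show ?thesis by (auto simp: large_rows_def)
  qed
  then show ?thesis by (simp add: good_diagonal_iff)
qed

(* Hence a swap class contains at least as many bad bijections as one of its halves:
   map each good member of the half to its (bad) transposed partner. *)
lemma pinned_half_bad:
  assumes "finite X" "finite Y" "a \<in> X" "k \<in> X" "a \<noteq> k" "u \<noteq> v"
    and "(a, u) \<in> L" "(a, v) \<notin> L" "(k, u) \<notin> L"
  shows "card (pinned X Y a u k v) \<le> card (bad_bijections L X Y \<inter> swap_class X Y a k u v)"
proof -
  let ?good = "\<lambda>\<sigma>. good_diagonal L (gen_diagonal X \<sigma>)"
  define make_bad where "make_bad \<sigma> = (if ?good \<sigma> then \<sigma> \<circ> transpose a k else \<sigma>)" for \<sigma>
  have maps_to: "make_bad \<sigma> \<in> bad_bijections L X Y \<inter> swap_class X Y a k u v"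
    if "\<sigma> \<in> pinned X Y a u k v" for \<sigma>
    using that swap_good_to_bad[OF that assms(3)] assms transpose_bijections[of \<sigma> X Y a k]
    by (auto simp: make_bad_def bad_bijections_def swap_class_def pinned_def)
  have "inj_on make_bad (pinned X Y a u k v)"
  proof (rule inj_onI)
    fix \<sigma> \<tau> assume \<sigma>: "\<sigma> \<in> pinned X Y a u k v" and \<tau>: "\<tau> \<in> pinned X Y a u k v"
      and eq: "make_bad \<sigma> = make_bad \<tau>"
    have "make_bad \<sigma> a = (if ?good \<sigma> then v else u)" "make_bad \<tau> a = (if ?good \<tau> then v else u)"
      using \<sigma> \<tau> by (auto simp: make_bad_def pinned_def)
    then have "?good \<sigma> \<longleftrightarrow> ?good \<tau>" using eq assms(6) by metis
    then show "\<sigma> = \<tau>"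
      using eq by (auto simp: make_bad_def fun_eq_iff split: if_splits)
        (metis transpose_involutory)
  qed
  then show ?thesis
    using maps_to assms(1,2) finite_bijections
    by (intro card_inj_on_le) (auto simp: bad_bijections_def)
qed

lemma pinned_all_bad:
  assumes "finite X" "a \<in> X" "k \<in> X" "a \<noteq> k" "(a, u) \<in> L" "(k, v) \<in> L"
  shows "pinned X Y a u k v \<subseteq> bad_bijections L X Y"
  using assms two_large_not_good[of X a L _ k]
  by (auto simp: pinned_def bad_bijections_def large_rows_def)

lemma swap_class_disjoint_rows:
  assumes "a \<in> X" "k \<in> X" "j \<in> X" "k \<noteq> j" "k \<noteq> a" "j \<noteq> a"
  shows "swap_class X Y a k u v \<inter> swap_class X Y a j u v = {}"
proof -
  have "\<not> inj_on \<sigma> X" if "\<sigma> \<in> swap_class X Y a k u v" "\<sigma> \<in> swap_class X Y a j u v" for \<sigma>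
  proof
    assume "inj_on \<sigma> X"
    moreover have "\<sigma> k = \<sigma> j \<or> \<sigma> k = \<sigma> a \<or> \<sigma> j = \<sigma> a"
      using that by (auto simp: swap_class_def pinned_def)
    ultimately show False using assms by (metis inj_onD)
  qed
  then show ?thesis by (auto simp: swap_class_def pinned_def bijections_def bij_betw_def)
qed

lemma swap_class_disjoint_values:
  assumes "v \<noteq> w" "u \<noteq> v" "u \<noteq> w"
  shows "swap_class X Y a k u v \<inter> swap_class X Y a k u w = {}"
  using assms by (auto simp: swap_class_def pinned_def)

lemma card_disjoint_family_le:
  assumes "finite S" "finite K"
    and "\<And>k j. k \<in> K \<Longrightarrow> j \<in> K \<Longrightarrow> k \<noteq> j \<Longrightarrow> T k \<inter> T j = {}"
    and "\<And>k. k \<in> K \<Longrightarrow> c \<le> card (S \<inter> T k)"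
  shows "card K * c \<le> card S"
proof -
  have "card K * c \<le> (\<Sum>k\<in>K. card (S \<inter> T k))"
    using sum_mono[of K "\<lambda>_. c"] assms(4) by simp
  also have "\<dots> = card (\<Union>k\<in>K. S \<inter> T k)"
    by (rule card_UN_disjoint[symmetric]) (use assms in auto)
  also have "\<dots> \<le> card S" by (rule card_mono) (use assms in auto)
  finally show ?thesis .
qed

context
  fixes L :: "(nat \<times> nat) set" and X Y :: "nat set" and a e :: nat
  assumes finite: "finite X" "finite Y" and same_card: "card X = card Y"
    and a: "a \<in> X" and e: "e \<in> Y" and ae_large: "(a, e) \<in> L"
begin

(* If row a contains a second large position (a,b), use for every other row k the class
   of {e,d} (when (k,e) is small) or the class of {b,e} (when (k,e) is large). *)
lemma bad_bound_row_with_two_large: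
  assumes b: "b \<in> Y" "b \<noteq> e" "(a, b) \<in> L" and d: "d \<in> Y" "(a, d) \<notin> L"
  shows "(card X - 1) * fact (card X - 2) \<le> 2 * card (bad_bijections L X Y)"
proof -
  let ?Bad = "bad_bijections L X Y"
  define K1 where "K1 = {k \<in> X - {a}. (k, e) \<notin> L}"
  define K2 where "K2 = {k \<in> X - {a}. (k, e) \<in> L}"
  have fin_bad: "finite ?Bad" using finite finite_bijections by (simp add: bad_bijections_def)
  have "card K1 * fact (card X - 2) \<le> card ?Bad"
  proof (rule card_disjoint_family_le[where T = "\<lambda>k. swap_class X Y a k e d"])
    fix k assume k: "k \<in> K1"
    then have "fact (card X - 2) = card (pinned X Y a e k d)"
      using d ae_large by (subst card_pinned) (auto simp: K1_def finite same_card a e)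
    also have "\<dots> \<le> card (?Bad \<inter> swap_class X Y a k e d)"
      using k d ae_large by (intro pinned_half_bad) (auto simp: K1_def finite a)
    finally show "fact (card X - 2) \<le> card (?Bad \<inter> swap_class X Y a k e d)" .
  qed (use fin_bad finite a swap_class_disjoint_rows in \<open>auto simp: K1_def\<close>)
  moreover have "card K2 * fact (card X - 2) \<le> card ?Bad"
  proof (rule card_disjoint_family_le[where T = "\<lambda>k. swap_class X Y a k b e"])
    fix k assume k: "k \<in> K2"
    then have "fact (card X - 2) = card (pinned X Y a b k e)"
      using b by (subst card_pinned) (auto simp: K2_def finite same_card a e)
    also have "\<dots> \<le> card (?Bad \<inter> swap_class X Y a k b e)"
      using k b fin_bad pinned_all_bad[OF finite(1) a, of k b L e Y]
      by (intro card_mono) (auto simp: K2_def swap_class_def)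
    finally show "fact (card X - 2) \<le> card (?Bad \<inter> swap_class X Y a k b e)" .
  qed (use fin_bad finite a swap_class_disjoint_rows in \<open>auto simp: K2_def\<close>)
  moreover have "card K1 + card K2 = card X - 1"
  proof -
    have "K1 \<union> K2 = X - {a}" "K1 \<inter> K2 = {}" by (auto simp: K1_def K2_def)
    then show ?thesis using finite a card_Un_disjoint[of K1 K2]
      by (simp add: K1_def K2_def)
  qed
  ultimately show ?thesis by (metis add_mult_distrib add_mono mult_2)
qed

(* If (a,e) is the only large position in row a, use the classes of the rows {a,c} and
   the columns {e,g}, for g ranging over Y - {e}. *)
lemma bad_bound_row_with_one_large:
  assumes row: "\<And>b. b \<in> Y - {e} \<Longrightarrow> (a, b) \<notin> L" and c: "c \<in> X" "(c, e) \<notin> L"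
  shows "(card X - 1) * fact (card X - 2) \<le> card (bad_bijections L X Y)"
proof -
  let ?Bad = "bad_bijections L X Y"
  have "c \<noteq> a" using c ae_large by auto
  have "card (Y - {e}) * fact (card X - 2) \<le> card ?Bad"
  proof (rule card_disjoint_family_le[where T = "\<lambda>g. swap_class X Y a c e g"])
    fix g assume g: "g \<in> Y - {e}"
    then have "fact (card X - 2) = card (pinned X Y a e c g)"
      using \<open>c \<noteq> a\<close> c by (subst card_pinned) (auto simp: finite same_card a e)
    also have "\<dots> \<le> card (?Bad \<inter> swap_class X Y a c e g)"
      using g c row \<open>c \<noteq> a\<close> ae_large by (intro pinned_half_bad) (auto simp: finite a)
    finally show "fact (card X - 2) \<le> card (?Bad \<inter> swap_class X Y a c e g)" .
  qed (use finite finite_bijections swap_class_disjoint_values in \<open>auto simp: bad_bijections_def\<close>)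
  then show ?thesis using finite e same_card by simp
qed

lemma bad_lower_bound:
  assumes d: "d \<in> Y" "(a, d) \<notin> L" and c: "c \<in> X" "(c, e) \<notin> L"
  shows "fact (card X - 1) \<le> 2 * card (bad_bijections L X Y)"
proof -
  have "c \<noteq> a" using c ae_large by auto
  then have "card {a, c} \<le> card X" using a c finite by (intro card_mono) auto
  then have "2 \<le> card X" using \<open>c \<noteq> a\<close> by simp
  then have "fact (card X - 1) = (card X - 1) * fact (card X - 2)"
    using fact_reduce[of "card X - 1", where 'a = nat] by (simp add: numeral_2_eq_2)
  moreover have "(card X - 1) * fact (card X - 2) \<le> 2 * card (bad_bijections L X Y)"
  proof (cases "\<exists>b \<in> Y - {e}. (a, b) \<in> L")
    case True
    then show ?thesis using bad_bound_row_with_two_large d by blast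
  next
    case False
    then show ?thesis using bad_bound_row_with_one_large[OF _ c] by auto
  qed
  ultimately show ?thesis by simp
qed

end

lemma q_good_few_bad:
  assumes "finite X" "finite Y" "card X = card Y" "card X \<ge> 1"
    and "q_good L q X Y" "q < 1 / (4 * real (card X))"
  shows "real (card (bad_bijections L X Y)) < fact (card X - 1) / 4"
proof -
  let ?B = "bijections X Y" and ?good = "\<lambda>\<sigma>. good_diagonal L (gen_diagonal X \<sigma>)"
  have "card {\<sigma> \<in> ?B. ?good \<sigma>} + card (bad_bijections L X Y) = card ?B"
    unfolding bad_bijections_def using assms finite_bijections
    by (subst card_Un_disjoint[symmetric]) (auto intro: arg_cong[where f = card])
  then have "real (card {\<sigma> \<in> ?B. ?good \<sigma>}) + real (card (bad_bijections L X Y)) = fact (card X)"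
    using assms card_bijections by (metis of_nat_add of_nat_fact)
  moreover have "real (card {\<sigma> \<in> ?B. ?good \<sigma>}) \<ge> (1 - q) * fact (card X)"
    using assms card_bijections[of X Y] by (simp add: q_good_def field_simps)
  ultimately have "real (card (bad_bijections L X Y)) \<le> q * card X * fact (card X - 1)"
    using assms(4) by (simp add: algebra_simps fact_reduce)
  moreover have "q * card X < 1 / 4" using assms(4,6) by (simp add: field_simps)
  then have "q * card X * fact (card X - 1) < 1 / 4 * fact (card X - 1)"
    by (rule mult_strict_right_mono) simp
  ultimately show ?thesis by linarith
qed

theorem lemma2p15:
  fixes n :: nat and A :: "nat \<Rightarrow> nat \<Rightarrow> real" and L :: "(nat \<times> nat) set"
    and X Y :: "nat set" and q :: real
  assumes "L \<subseteq> {1..n} \<times> {1..n}"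
    and "restriction n X Y"
    and "card X \<ge> 1"
    and "q_good L q X Y"
    and "q < 1 / (4 * real (card X))"
  shows "has_0_strong_line L X Y"
proof (rule ccontr)
  assume no_line: "\<not> has_0_strong_line L X Y"
  have finite: "finite X" "finite Y" and same_card: "card X = card Y"
    using assms(2) by (auto simp: restriction_def intro: finite_subset)
  let ?m = "card X" and ?Bad = "bad_bijections L X Y"
  have upper: "real (card ?Bad) < fact (?m - 1) / 4"
    using q_good_few_bad[OF finite same_card assms(3-5)] .
  have "real (card ?Bad) < fact ?m"
    using upper fact_mono[of "?m - 1" ?m, where 'a = real] of_nat_0_le_iff[of "card ?Bad"]
    by linarith
  then have "card ?Bad < card (bijections X Y)"
    by (metis card_bijections[OF finite same_card] of_nat_fact of_nat_less_iff)
  then have "?Bad \<noteq> bijections X Y" by auto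
  then obtain \<sigma> where \<sigma>: "\<sigma> \<in> bijections X Y" "good_diagonal L (gen_diagonal X \<sigma>)"
    by (auto simp: bad_bijections_def)
  then obtain a where "large_rows L X \<sigma> = {a}" by (metis card_1_singletonE good_diagonal_iff)
  then have a: "a \<in> X" "(a, \<sigma> a) \<in> L" by (auto simp: large_rows_def)
  have e: "\<sigma> a \<in> Y" using \<sigma>(1) a by (auto simp: bijections_def)
  obtain d c where "d \<in> Y" "(a, d) \<notin> L" "c \<in> X" "(c, \<sigma> a) \<notin> L"
    using no_line a(1) e unfolding has_0_strong_line_def by blast
  then have "fact (?m - 1) \<le> 2 * card ?Bad"
    using bad_lower_bound[OF finite same_card a(1) e a(2)] by blast
  then have "(fact (?m - 1) :: real) \<le> 2 * real (card ?Bad)"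
    by (metis of_nat_fact of_nat_le_iff of_nat_mult of_nat_numeral)
  then show False using upper fact_gt_zero[of "?m - 1", where 'a = real] by linarith
qed

end
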